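(* Let $X>0$, $n\ge 1$, and let $A_0,A_1:\mathbb{R}\to\mathbb{C}^{n\times n}$ be $X$-periodic with $A_0,A_1\in L^2_{\rm per}([0,X])$ (entrywise). For $\lambda\in\mathbb{C}$ define on $L^2_{\rm per}([0,X];\mathbb{C}^n)$ the operators $$K_1 U=\partial_x(\partial_x^2-1)^{-1}(A_1U),\qquad K_0U=(\partial_x^2-1)^{-1}\big((A_0+(1-\lambda)I)U\big),$$ initially on trigonometric polynomials. Then $K=K_1+K_0$ extends to a Hilbert–Schmidt operator on $L^2_{\rm per}([0,X];\mathbb{C}^n)$.
   Context: $L^2_{\rm per}([0,X];\mathbb{C}^n)$ denotes the Hilbert space of $X$-periodic $\mathbb{C}^n$-valued functions square-integrable on $[0,X]$. $(\partial_x^2-1)^{-1}$ and $\partial_x(\partial_x^2-1)^{-1}$ are the Fourier multipliers acting on the $k$-th Fourier mode $e^{2\pi i kx/X}$ by $(-(2\pi k/X)^2-1)^{-1}$ and $(2\pi i k/X)(-(2\pi k/X)^2-1)^{-1}$ respectively. An operator $A$ on a separable Hilbert space is Hilbert–Schmidt if $\sum_{j,k}|\langle Ae_j,e_k\rangle|^2<\infty$ for an orthonormal basis $\{e_j\}$. *)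

theory Defs
  imports "HOL-Analysis.Analysis"
begin

definition per_L2 :: "real \<Rightarrow> (real \<Rightarrow> complex) \<Rightarrow> bool" where
  "per_L2 X f \<longleftrightarrow> (\<forall>x. f (x + X) = f x) \<and>
     f \<in> borel_measurable (lebesgue_on {0..X}) \<and>
     integrable (lebesgue_on {0..X}) (\<lambda>x. (cmod (f x))\<^sup>2)"

definition l2_inner :: "real \<Rightarrow> (real \<Rightarrow> complex^'n) \<Rightarrow> (real \<Rightarrow> complex^'n) \<Rightarrow> complex" where
  "l2_inner X U V = (LINT x|lebesgue_on {0..X}. (\<Sum>i\<in>UNIV. U x $ i * cnj (V x $ i)))"

definition fourier_basis :: "real \<Rightarrow> int \<Rightarrow> 'n::finite \<Rightarrow> real \<Rightarrow> complex^'n" where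
  "fourier_basis X k a = (\<lambda>x. \<chi> i. if i = a then
      complex_of_real (1 / sqrt X) * exp (\<i> * complex_of_real (2 * pi * real_of_int k * x / X))
    else 0)"

text \<open>Symbols of the Fourier multipliers (d^2-1)^(-1) and d (d^2-1)^(-1).\<close>
definition inv_symbol :: "real \<Rightarrow> int \<Rightarrow> complex" where
  "inv_symbol X k = complex_of_real (1 / (- (2 * pi * real_of_int k / X)\<^sup>2 - 1))"

definition deriv_inv_symbol :: "real \<Rightarrow> int \<Rightarrow> complex" where
  "deriv_inv_symbol X k = \<i> * complex_of_real (2 * pi * real_of_int k / X) * inv_symbol X k"

text \<open>Coefficient <M F, e_{k,b}> of the Fourier multiplier M with symbol m applied to F:
  M acts on the k-th Fourier mode by multiplication with m k.\<close>
definition multiplier_coeff ::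
  "real \<Rightarrow> (int \<Rightarrow> complex) \<Rightarrow> (real \<Rightarrow> complex^'n::finite) \<Rightarrow> int \<Rightarrow> 'n \<Rightarrow> complex" where
  "multiplier_coeff X m F k b = m k * l2_inner X F (fourier_basis X k b)"

text \<open>Matrix entry <K e_{j,a}, e_{k,b}> of K = K_1 + K_0, where
  K_1 U = d (d^2-1)^(-1) (A_1 U) and K_0 U = (d^2-1)^(-1) ((A_0 + (1-lam) I) U).\<close>
definition K_entry ::
  "real \<Rightarrow> (real \<Rightarrow> complex^'n^'n) \<Rightarrow> (real \<Rightarrow> complex^'n^'n) \<Rightarrow> complex
     \<Rightarrow> int \<Rightarrow> 'n::finite \<Rightarrow> int \<Rightarrow> 'n \<Rightarrow> complex" where
  "K_entry X A0 A1 lam j a k b =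
     multiplier_coeff X (deriv_inv_symbol X) (\<lambda>x. A1 x *v fourier_basis X j a x) k b
   + multiplier_coeff X (inv_symbol X) (\<lambda>x. (A0 x + mat (1 - lam)) *v fourier_basis X j a x) k b"

end

(* With respect to the Fourier basis e_{j,a}, the entry <K e_{j,a}, e_{k,b}> equals
   (m(k) c_{ba}(j-k) + s(k) d_{ba}(j-k)) / X, where m and s are the symbols of d (d^2-1)^(-1)
   and (d^2-1)^(-1), and c_{ba}, d_{ba} are the Fourier coefficients of the entries of A1 and of
   A0 + (1-lam) I. Both symbols satisfy |.|^2 <= w(k) = 1/(1 + (2 pi k/X)^2), which is summable
   over k, and by Bessel's inequality Phi(l) = sum_{a,b} |c_{ba}(l)|^2 + |d_{ba}(l)|^2 is summable
   over l. Hence the squared entries are dominated by 2/X^2 w(k) Phi(j-k), a summable family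
   indexed by (j,k). *)

theory Submission
  imports Defs
begin

lemma summable_on_finite_sum:
  fixes f :: "'i \<Rightarrow> 'a \<Rightarrow> 'b::topological_comm_monoid_add"
  assumes "finite I" "\<And>i. i \<in> I \<Longrightarrow> f i summable_on A"
  shows "(\<lambda>x. \<Sum>i\<in>I. f i x) summable_on A"
  using assms by (induction I rule: finite_induct) (auto intro: summable_on_add)

lemma summable_on_int_from_nat:
  fixes f :: "int \<Rightarrow> real"
  assumes "(\<lambda>n. f (int n)) summable_on UNIV" "(\<lambda>n. f (- int n)) summable_on UNIV"
  shows "f summable_on UNIV"
proof -
  have "f summable_on range int" "f summable_on range (\<lambda>n. - int n)"
    using assms by (subst summable_on_reindex; simp add: inj_on_def o_def)+
  moreover have "range int \<union> range (\<lambda>n. - int n) = (UNIV :: int set)"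
  proof -
    have "k \<in> range int \<union> range (\<lambda>n. - int n)" for k
    proof (cases k rule: int_cases)
      case (neg n)
      then show ?thesis by (metis UnI2 rangeI)
    qed blast
    then show ?thesis by blast
  qed
  ultimately show ?thesis
    using summable_on_union by metis
qed

lemma summable_on_convolution:
  fixes w \<phi> :: "'a::ab_group_add \<Rightarrow> real"
  assumes w: "w summable_on UNIV" "\<And>k. 0 \<le> w k"
    and \<phi>: "\<phi> summable_on UNIV" "\<And>l. 0 \<le> \<phi> l"
  shows "(\<lambda>(j, k). w k * \<phi> (j - k)) summable_on UNIV"
proof -
  have "((\<lambda>k. w k * \<phi> l) has_sum infsum w UNIV * \<phi> l) UNIV" for l
    using has_sum_cmult_left[OF has_sum_infsum[OF w(1)], of "\<phi> l"] by simp
  then have "(\<lambda>(l, k). w k * \<phi> l) summable_on UNIV \<times> UNIV"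
    using summable_on_cmult_right[OF \<phi>(1)] w(2) \<phi>(2)
    by (intro summable_on_SigmaI[where g = "\<lambda>l. infsum w UNIV * \<phi> l"]) auto
  then show ?thesis
    by (subst summable_on_reindex_bij_witness[where i = "\<lambda>(l, k). (l + k, k)" and j = "\<lambda>(j, k). (j - k, k)"])
       auto
qed

lemma summable_on_convolution_finite_indices:
  fixes w \<phi> :: "'a::ab_group_add \<Rightarrow> real"
  assumes "w summable_on UNIV" "\<And>k. 0 \<le> w k" "\<phi> summable_on UNIV" "\<And>l. 0 \<le> \<phi> l"
  shows "(\<lambda>((j, a), (k, b)). w k * \<phi> (j - k)) summable_on (UNIV :: (('a \<times> 'i::finite) \<times> ('a \<times> 'i)) set)"
proof -
  let ?P = "\<lambda>(j, k). w k * \<phi> (j - k)"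
  have "((\<lambda>_::'i \<times> 'i. ?P jk) has_sum real CARD('i \<times> 'i) * ?P jk) UNIV" for jk
    by (rule has_sum_finiteI) auto
  then have "(?P \<circ> fst) summable_on UNIV \<times> (UNIV :: ('i \<times> 'i) set)"
    using summable_on_cmult_right[OF summable_on_convolution[OF assms]] assms(2,4)
    by (intro summable_on_SigmaI[where g = "\<lambda>jk. real CARD('i \<times> 'i) * ?P jk"])
      (auto intro!: mult_nonneg_nonneg)
  then show ?thesis
    by (subst summable_on_reindex_bij_witness[where i = "\<lambda>((j, k), (a, b)). ((j, a), (k, b))"
          and j = "\<lambda>((j, a), (k, b)). ((j, k), (a, b))"]) auto
qed

lemma norm_add_squared_le:
  fixes u v :: "'a::real_normed_vector"
  shows "(norm (u + v))\<^sup>2 \<le> 2 * (norm u)\<^sup>2 + 2 * (norm v)\<^sup>2"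
proof -
  have "(norm (u + v))\<^sup>2 \<le> (norm u + norm v)\<^sup>2"
    by (intro power_mono norm_triangle_ineq) simp
  also have "\<dots> \<le> 2 * (norm u)\<^sup>2 + 2 * (norm v)\<^sup>2"
    using sum_squares_ge_zero[of "norm u - norm v" 0] by (simp add: power2_eq_square algebra_simps)
  finally show ?thesis .
qed

lemma (in finite_measure) integrable_of_square_norm:
  fixes f :: "'a \<Rightarrow> 'b::{second_countable_topology, banach, real_normed_div_algebra}"
  assumes "f \<in> borel_measurable M" "integrable M (\<lambda>x. (norm (f x))\<^sup>2)"
  shows "integrable M f"
proof (rule square_integrable_imp_integrable[OF assms(1)])
  show "integrable M (\<lambda>x. f x ^ 2)"
    using assms by (subst integrable_norm_iff[symmetric]) (auto simp: norm_power)
qed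

lemma (in finite_measure) integrable_square_norm_add_const:
  fixes f :: "'a \<Rightarrow> 'b::{second_countable_topology, banach}"
  assumes "f \<in> borel_measurable M" "integrable M (\<lambda>x. (norm (f x))\<^sup>2)"
  shows "integrable M (\<lambda>x. (norm (f x + c))\<^sup>2)"
proof (rule Bochner_Integration.integrable_bound)
  show "integrable M (\<lambda>x. 2 * (norm (f x))\<^sup>2 + 2 * (norm c)\<^sup>2)"
    using assms by auto
  show "AE x in M. norm ((norm (f x + c))\<^sup>2) \<le> norm (2 * (norm (f x))\<^sup>2 + 2 * (norm c)\<^sup>2)"
    using norm_add_squared_le by auto
qed (use assms in measurable)

lemma finite_measure_lebesgue_on_interval: "finite_measure (lebesgue_on {a..b::real})"
  by (rule finite_measure_lebesgue_on) auto

definition fourier_mode :: "real \<Rightarrow> int \<Rightarrow> real \<Rightarrow> complex" where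
  "fourier_mode X l x = cis (2 * pi * real_of_int l * x / X)"

lemma fourier_mode_mult: "fourier_mode X l x * fourier_mode X m x = fourier_mode X (l + m) x"
  unfolding fourier_mode_def by (simp add: cis_mult add_divide_distrib distrib_left distrib_right)

lemma cnj_fourier_mode: "cnj (fourier_mode X l x) = fourier_mode X (- l) x"
  unfolding fourier_mode_def by (simp add: cis_cnj)

lemma continuous_on_fourier_mode: "continuous_on S (fourier_mode X l)"
proof -
  have "fourier_mode X l = (\<lambda>x. cis ((2 * pi * real_of_int l / X) * x))"
    by (auto simp: fourier_mode_def fun_eq_iff)
  then show ?thesis
    by (simp only:) (intro continuous_on_cis continuous_on_mult_left continuous_on_id)
qed

lemma fourier_mode_measurable: "fourier_mode X l \<in> borel_measurable (lebesgue_on {0..X})"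
  by (rule continuous_imp_measurable_on_sets_lebesgue[OF continuous_on_fourier_mode]) auto

lemma integrable_fourier_mode: "integrable (lebesgue_on {0..X}) (fourier_mode X l)"
  by (rule continuous_imp_integrable_real[OF continuous_on_fourier_mode])

lemma integral_fourier_mode:
  assumes "X > 0"
  shows "integral\<^sup>L (lebesgue_on {0..X}) (fourier_mode X l) = (if l = 0 then of_real X else 0)"
proof (cases "l = 0")
  case True
  then have "fourier_mode X l = (\<lambda>_. 1)"
    by (simp add: fourier_mode_def fun_eq_iff)
  then have "integral {0..X} (fourier_mode X l) = of_real X"
    using assms by (simp add: scaleR_conv_of_real)
  then show ?thesis
    using True lebesgue_integral_eq_integral[OF integrable_fourier_mode] by simp
next
  case False
  define a where "a = 2 * pi * real_of_int l / X"
  have "a \<noteq> 0" using False assms by (simp add: a_def)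
  have mode: "fourier_mode X l x = cis (a * x)" for x
    by (simp add: fourier_mode_def a_def)
  define F where "F x = cis (a * x) / (\<i> * of_real a)" for x
  have "(F has_vector_derivative fourier_mode X l x) (at x within {0..X})" for x
  proof -
    have "((\<lambda>x. cis (a * x)) has_vector_derivative \<i> * of_real a * cis (a * x)) (at x within {0..X})"
      unfolding has_vector_derivative_def
      by (auto intro!: derivative_eq_intros simp: fun_eq_iff scaleR_conv_of_real algebra_simps)
    then show ?thesis
      using \<open>a \<noteq> 0\<close> unfolding F_def mode by (auto intro: derivative_eq_intros)
  qed
  then have "(fourier_mode X l has_integral F X - F 0) {0..X}"
    using assms by (intro fundamental_theorem_of_calculus) auto
  moreover have "F X = F 0"
    using assms by (simp add: F_def a_def cis_multiple_2pi)
  ultimately show ?thesis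
    using False lebesgue_integral_eq_integral[OF integrable_fourier_mode] by (simp add: integral_unique)
qed

lemma integrable_mult_fourier_mode:
  assumes "f \<in> borel_measurable (lebesgue_on {0..X})"
    and "integrable (lebesgue_on {0..X}) (\<lambda>x. (cmod (f x))\<^sup>2)"
  shows "integrable (lebesgue_on {0..X}) (\<lambda>x. f x * fourier_mode X l x)"
proof (rule Bochner_Integration.integrable_bound)
  show "integrable (lebesgue_on {0..X}) f"
    using finite_measure.integrable_of_square_norm[OF finite_measure_lebesgue_on_interval assms] .
  show "(\<lambda>x. f x * fourier_mode X l x) \<in> borel_measurable (lebesgue_on {0..X})"
    using assms(1) fourier_mode_measurable by measurable
  show "AE x in lebesgue_on {0..X}. norm (f x * fourier_mode X l x) \<le> norm (f x)"
    by (simp add: norm_mult fourier_mode_def)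
qed

text \<open>No conjugate in the kernel: this is X times the Fourier coefficient of f at mode -l,
  the normalisation in which the pairing of fourier_basis vectors produces it.\<close>
definition fourier_coeff :: "real \<Rightarrow> (real \<Rightarrow> complex) \<Rightarrow> int \<Rightarrow> complex" where
  "fourier_coeff X f l = (LINT x|lebesgue_on {0..X}. f x * fourier_mode X l x)"

lemma integral_norm_trig_poly:
  assumes "X > 0" "finite L"
  shows "(LINT x|lebesgue_on {0..X}. (cmod (\<Sum>l\<in>L. c l * fourier_mode X l x))\<^sup>2)
       = X * (\<Sum>l\<in>L. (cmod (c l))\<^sup>2)"
proof -
  let ?M = "lebesgue_on {0..X}"
  have expand: "complex_of_real ((cmod (\<Sum>l\<in>L. c l * fourier_mode X l x))\<^sup>2)
      = (\<Sum>l\<in>L. \<Sum>m\<in>L. c l * cnj (c m) * fourier_mode X (l - m) x)" for x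
  proof -
    have mode: "fourier_mode X l x * cnj (fourier_mode X m x) = fourier_mode X (l - m) x" for l m
      by (simp add: cnj_fourier_mode fourier_mode_mult)
    show ?thesis
      unfolding complex_norm_square cnj_sum sum_product
      by (simp add: mode[symmetric] mult_ac)
  qed
  have "complex_of_real (LINT x|?M. (cmod (\<Sum>l\<in>L. c l * fourier_mode X l x))\<^sup>2)
      = (\<Sum>l\<in>L. \<Sum>m\<in>L. c l * cnj (c m) * integral\<^sup>L ?M (fourier_mode X (l - m)))"
    unfolding integral_complex_of_real[symmetric] expand
    by (simp add: integrable_fourier_mode)
  also have "\<dots> = (\<Sum>l\<in>L. c l * cnj (c l) * of_real X)"
    using assms by (simp add: integral_fourier_mode if_distrib cong: if_cong)
  also have "\<dots> = complex_of_real (X * (\<Sum>l\<in>L. (cmod (c l))\<^sup>2))"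
    unfolding of_real_mult of_real_sum complex_norm_square by (simp add: sum_distrib_left mult_ac)
  finally show ?thesis
    using of_real_eq_iff by blast
qed

lemma bessel_inequality:
  assumes X: "X > 0" and L: "finite L"
    and f_meas: "f \<in> borel_measurable (lebesgue_on {0..X})"
    and f_sq: "integrable (lebesgue_on {0..X}) (\<lambda>x. (cmod (f x))\<^sup>2)"
  shows "(\<Sum>l\<in>L. (cmod (fourier_coeff X f l))\<^sup>2) \<le> X * (LINT x|lebesgue_on {0..X}. (cmod (f x))\<^sup>2)"
proof -
  let ?M = "lebesgue_on {0..X}"
  define S where "S = (\<Sum>l\<in>L. (cmod (fourier_coeff X f l))\<^sup>2)"
  define q where "q x = (\<Sum>l\<in>L. cnj (fourier_coeff X f l) * fourier_mode X l x)" for x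
  have fq: "f x * q x = (\<Sum>l\<in>L. cnj (fourier_coeff X f l) * (f x * fourier_mode X l x))" for x
    by (simp add: q_def sum_distrib_left mult_ac)
  have fq_int: "integrable ?M (\<lambda>x. f x * q x)"
    unfolding fq using integrable_mult_fourier_mode[OF f_meas f_sq] by auto
  have "integral\<^sup>L ?M (\<lambda>x. f x * q x) = (\<Sum>l\<in>L. cnj (fourier_coeff X f l) * fourier_coeff X f l)"
    unfolding fq using integrable_mult_fourier_mode[OF f_meas f_sq] by (simp add: fourier_coeff_def)
  then have pairing: "integral\<^sup>L ?M (\<lambda>x. f x * q x) = of_real S"
    unfolding S_def of_real_sum complex_norm_square by (simp add: mult.commute)
  have q_sq: "(LINT x|?M. (cmod (q x))\<^sup>2) = X * S"
    unfolding q_def S_def using integral_norm_trig_poly[OF X L] by simp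
  have q_sq_int: "integrable ?M (\<lambda>x. (cmod (q x))\<^sup>2)"
    unfolding q_def by (intro continuous_imp_integrable_real continuous_intros continuous_on_fourier_mode)
  \<comment> \<open>cnj q / X is the partial Fourier sum of f over L; expand 0 \<le> \<integral> |f - cnj q / X|^2\<close>
  define r where "r x = Re (f x * q x)" for x
  have r_int: "integrable ?M r"
    unfolding r_def using integrable_Re[OF fq_int] .
  have r_integral: "integral\<^sup>L ?M r = S"
    unfolding r_def integral_Re[OF fq_int] pairing by simp
  have expand: "(cmod (f x - cnj (q x) / of_real X))\<^sup>2
      = (cmod (f x))\<^sup>2 - 2 / X * r x + (cmod (q x))\<^sup>2 / X\<^sup>2" for x
    using X unfolding cmod_power2 r_def by (simp add: power2_eq_square field_simps)
  have "0 \<le> (LINT x|?M. (cmod (f x - cnj (q x) / of_real X))\<^sup>2)"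
    by simp
  also have "\<dots> = (LINT x|?M. (cmod (f x))\<^sup>2) - 2 / X * integral\<^sup>L ?M r
      + (LINT x|?M. (cmod (q x))\<^sup>2) / X\<^sup>2"
    unfolding expand using f_sq r_int q_sq_int by simp
  also have "\<dots> = (LINT x|?M. (cmod (f x))\<^sup>2) - S / X"
    unfolding r_integral q_sq using X by (simp add: power2_eq_square field_simps)
  finally show ?thesis
    using X by (simp add: S_def field_simps)
qed

lemma summable_on_fourier_coeff_squared:
  assumes "X > 0" "f \<in> borel_measurable (lebesgue_on {0..X})"
    and "integrable (lebesgue_on {0..X}) (\<lambda>x. (cmod (f x))\<^sup>2)"
  shows "(\<lambda>l. (cmod (fourier_coeff X f l))\<^sup>2) summable_on UNIV"
  by (rule nonneg_bdd_above_summable_on) (auto intro!: bdd_aboveI2 bessel_inequality[OF assms(1) _ assms(2,3)])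

definition multiplier_weight :: "real \<Rightarrow> int \<Rightarrow> real" where
  "multiplier_weight X k = 1 / (1 + (2 * pi * real_of_int k / X)\<^sup>2)"

lemma multiplier_weight_nonneg: "0 \<le> multiplier_weight X k"
  unfolding multiplier_weight_def by (simp add: add_pos_nonneg)

lemma summable_on_multiplier_weight:
  assumes X: "X > 0"
  shows "multiplier_weight X summable_on UNIV"
proof (rule summable_on_int_from_nat)
  have "summable (\<lambda>n. multiplier_weight X (int n))"
  proof (rule summable_comparison_test'[of "\<lambda>n. (X / (2 * pi))\<^sup>2 * inverse (real n ^ 2)" 1])
    show "summable (\<lambda>n. (X / (2 * pi))\<^sup>2 * inverse (real n ^ 2))"
      by (intro summable_mult inverse_power_summable) simp
    fix n :: nat assume n: "1 \<le> n"
    define s where "s = 2 * pi * real n / X"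
    have "0 < s" using X n by (simp add: s_def)
    then have "multiplier_weight X (int n) \<le> 1 / s\<^sup>2"
      unfolding multiplier_weight_def of_int_of_nat_eq s_def[symmetric]
      by (simp add: frac_le add_pos_nonneg)
    also have "\<dots> = (X / (2 * pi))\<^sup>2 * inverse (real n ^ 2)"
      by (simp add: s_def field_simps)
    finally show "norm (multiplier_weight X (int n)) \<le> (X / (2 * pi))\<^sup>2 * inverse (real n ^ 2)"
      using multiplier_weight_nonneg by simp
  qed
  then show nat: "(\<lambda>n. multiplier_weight X (int n)) summable_on UNIV"
    by (simp add: summable_on_UNIV_nonneg_real_iff multiplier_weight_nonneg)
  have "multiplier_weight X (- k) = multiplier_weight X k" for k
    by (simp add: multiplier_weight_def)
  with nat show "(\<lambda>n. multiplier_weight X (- int n)) summable_on UNIV"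
    by simp
qed

lemma norm_inv_symbol_squared_le: "(cmod (inv_symbol X k))\<^sup>2 \<le> multiplier_weight X k"
proof -
  have "(1 / (- t - 1))\<^sup>2 \<le> 1 / (1 + t)" if "0 \<le> t" for t :: real
  proof -
    have "(1 / (- t - 1))\<^sup>2 = 1 / (1 + t) * (1 / (1 + t))"
      by (simp add: power2_eq_square field_simps)
    also have "\<dots> \<le> 1 / (1 + t) * 1"
      using that by (intro mult_left_mono) auto
    finally show ?thesis by simp
  qed
  from this[of "(2 * pi * real_of_int k / X)\<^sup>2"] show ?thesis
    unfolding inv_symbol_def multiplier_weight_def norm_of_real power2_abs by simp
qed

lemma norm_deriv_inv_symbol_squared_le: "(cmod (deriv_inv_symbol X k))\<^sup>2 \<le> multiplier_weight X k"
proof -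
  have "t * (1 / (- t - 1))\<^sup>2 \<le> 1 / (1 + t)" if "0 \<le> t" for t :: real
  proof -
    have "t * (1 / (- t - 1))\<^sup>2 = t / (1 + t) * (1 / (1 + t))"
      by (simp add: power2_eq_square field_simps)
    also have "\<dots> \<le> 1 * (1 / (1 + t))"
      using that by (intro mult_right_mono) auto
    finally show ?thesis by simp
  qed
  from this[of "(2 * pi * real_of_int k / X)\<^sup>2"] show ?thesis
    unfolding deriv_inv_symbol_def inv_symbol_def multiplier_weight_def norm_mult norm_of_real
      power_mult_distrib power2_abs by simp
qed

lemma l2_inner_matrix_fourier_basis:
  fixes B :: "real \<Rightarrow> complex^'n::finite^'n"
  assumes "X > 0"
  shows "l2_inner X (\<lambda>x. B x *v fourier_basis X j a x) (fourier_basis X k b)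
       = fourier_coeff X (\<lambda>x. B x $ b $ a) (j - k) / of_real X"
proof -
  have basis: "fourier_basis X k a x = (\<chi> i. if i = a then of_real (1 / sqrt X) * fourier_mode X k x else 0)"
    for k a x
    unfolding fourier_basis_def fourier_mode_def cis_conv_exp by simp
  have scale: "of_real (1 / sqrt X) * of_real (1 / sqrt X) = 1 / (of_real X :: complex)"
    using assms by (simp flip: of_real_mult)
  have "(\<Sum>i\<in>UNIV. (B x *v fourier_basis X j a x) $ i * cnj (fourier_basis X k b x $ i))
      = B x $ b $ a * (of_real (1 / sqrt X) * of_real (1 / sqrt X))
          * (fourier_mode X j x * cnj (fourier_mode X k x))" for x
    by (simp add: basis matrix_vector_mult_def if_distrib mult_ac cong: if_cong)
  also have "\<dots> x = B x $ b $ a * fourier_mode X (j - k) x / of_real X" for x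
    unfolding scale by (simp add: cnj_fourier_mode fourier_mode_mult)
  finally show ?thesis
    unfolding l2_inner_def fourier_coeff_def by simp
qed

lemma per_L2_add_const: "per_L2 X f \<Longrightarrow> per_L2 X (\<lambda>x. f x + c)"
  unfolding per_L2_def
  using finite_measure.integrable_square_norm_add_const[OF finite_measure_lebesgue_on_interval] by auto

lemma summable_on_fourier_coeff_squared_per_L2:
  "X > 0 \<Longrightarrow> per_L2 X f \<Longrightarrow> (\<lambda>l. (cmod (fourier_coeff X f l))\<^sup>2) summable_on UNIV"
  unfolding per_L2_def by (intro summable_on_fourier_coeff_squared) auto

lemma per_L2_add_mat:
  assumes "\<forall>i j. per_L2 X (\<lambda>x. A x $ i $ j)"
  shows "\<forall>i j. per_L2 X (\<lambda>x. (A x + mat c) $ i $ j)"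
  using assms per_L2_add_const by (simp add: mat_def)

definition matrix_coeff_mass :: "real \<Rightarrow> (real \<Rightarrow> complex^'n::finite^'n) \<Rightarrow> int \<Rightarrow> real" where
  "matrix_coeff_mass X B l = (\<Sum>b\<in>UNIV. \<Sum>a\<in>UNIV. (cmod (fourier_coeff X (\<lambda>x. B x $ b $ a) l))\<^sup>2)"

lemma matrix_coeff_mass_nonneg: "0 \<le> matrix_coeff_mass X B l"
  unfolding matrix_coeff_mass_def by (intro sum_nonneg) simp

lemma norm_fourier_coeff_entry_squared_le:
  "(cmod (fourier_coeff X (\<lambda>x. B x $ b $ a) l))\<^sup>2 \<le> matrix_coeff_mass X B l"
proof -
  have "(cmod (fourier_coeff X (\<lambda>x. B x $ b $ a) l))\<^sup>2
      \<le> (\<Sum>a'\<in>UNIV. (cmod (fourier_coeff X (\<lambda>x. B x $ b $ a') l))\<^sup>2)"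
    by (rule member_le_sum) auto
  also have "\<dots> \<le> matrix_coeff_mass X B l"
    unfolding matrix_coeff_mass_def by (rule member_le_sum[of b]) (auto intro: sum_nonneg)
  finally show ?thesis .
qed

lemma summable_on_matrix_coeff_mass:
  assumes "X > 0" "\<forall>i j. per_L2 X (\<lambda>x. B x $ i $ j)"
  shows "matrix_coeff_mass X B summable_on UNIV"
  unfolding matrix_coeff_mass_def[abs_def] using assms
  by (intro summable_on_finite_sum summable_on_fourier_coeff_squared_per_L2) auto

lemma K_entry_eq:
  assumes "X > 0"
  shows "K_entry X A0 A1 lam j a k b =
     (deriv_inv_symbol X k * fourier_coeff X (\<lambda>x. A1 x $ b $ a) (j - k)
      + inv_symbol X k * fourier_coeff X (\<lambda>x. (A0 x + mat (1 - lam)) $ b $ a) (j - k)) / of_real X"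
  unfolding K_entry_def multiplier_coeff_def l2_inner_matrix_fourier_basis[OF assms]
  by (simp add: add_divide_distrib)

lemma norm_K_entry_squared_le:
  assumes "X > 0"
  shows "(cmod (K_entry X A0 A1 lam j a k b))\<^sup>2 \<le> 2 / X\<^sup>2 * (multiplier_weight X k *
     (matrix_coeff_mass X A1 (j - k) + matrix_coeff_mass X (\<lambda>x. A0 x + mat (1 - lam)) (j - k)))"
    (is "_ \<le> _ * (?w * (?m1 + ?m0))")
proof -
  define d s F1 F0 where "d = deriv_inv_symbol X k" and "s = inv_symbol X k"
    and "F1 = fourier_coeff X (\<lambda>x. A1 x $ b $ a) (j - k)"
    and "F0 = fourier_coeff X (\<lambda>x. (A0 x + mat (1 - lam)) $ b $ a) (j - k)"
  have "(cmod (K_entry X A0 A1 lam j a k b))\<^sup>2 = (cmod (d * F1 + s * F0))\<^sup>2 / X\<^sup>2"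
    using assms by (simp add: K_entry_eq d_def s_def F1_def F0_def norm_divide power_divide)
  also have "\<dots> \<le> (2 * ((cmod d)\<^sup>2 * (cmod F1)\<^sup>2) + 2 * ((cmod s)\<^sup>2 * (cmod F0)\<^sup>2)) / X\<^sup>2"
    using norm_add_squared_le[of "d * F1" "s * F0"]
    by (intro divide_right_mono) (simp_all add: norm_mult power_mult_distrib)
  also have "\<dots> \<le> (2 * (?w * ?m1) + 2 * (?w * ?m0)) / X\<^sup>2"
    unfolding d_def s_def F1_def F0_def
    by (intro divide_right_mono add_mono mult_left_mono mult_mono norm_deriv_inv_symbol_squared_le
        norm_inv_symbol_squared_le norm_fourier_coeff_entry_squared_le multiplier_weight_nonneg) simp_all
  also have "\<dots> = 2 / X\<^sup>2 * (?w * (?m1 + ?m0))"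
    by (simp add: field_simps)
  finally show ?thesis .
qed

theorem lemma3p1:
  fixes X :: real
    and A0 A1 :: "real \<Rightarrow> complex^'n::finite^'n"
    and lam :: complex
  assumes "X > 0"
    and "\<forall>i j. per_L2 X (\<lambda>x. A0 x $ i $ j)"
    and "\<forall>i j. per_L2 X (\<lambda>x. A1 x $ i $ j)"
  shows "(\<lambda>((j, a), (k, b)). (cmod (K_entry X A0 A1 lam j a k b))\<^sup>2)
           summable_on (UNIV :: ((int \<times> 'n) \<times> (int \<times> 'n)) set)"
proof -
  define \<Phi> where "\<Phi> l = matrix_coeff_mass X A1 l + matrix_coeff_mass X (\<lambda>x. A0 x + mat (1 - lam)) l"
    for l
  have "\<Phi> summable_on UNIV"
    unfolding \<Phi>_def[abs_def] using assms
    by (intro summable_on_add summable_on_matrix_coeff_mass per_L2_add_mat)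
  moreover have "0 \<le> \<Phi> l" for l
    unfolding \<Phi>_def by (intro add_nonneg_nonneg matrix_coeff_mass_nonneg)
  ultimately have weights_summable: "(\<lambda>((j, a), (k, b)). multiplier_weight X k * \<Phi> (j - k))
      summable_on (UNIV :: ((int \<times> 'n) \<times> (int \<times> 'n)) set)"
    using summable_on_multiplier_weight[OF assms(1)] multiplier_weight_nonneg
    by (intro summable_on_convolution_finite_indices)
  have bound: "(cmod (K_entry X A0 A1 lam j a k b))\<^sup>2 \<le> 2 / X\<^sup>2 * (multiplier_weight X k * \<Phi> (j - k))"
    for j a k b
    unfolding \<Phi>_def by (rule norm_K_entry_squared_le[OF assms(1)])
  show ?thesis
    by (rule summable_on_comparison_test[OF summable_on_cmult_right[OF weights_summable, of "2 / X\<^sup>2"]])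
      (simp_all add: bound[simplified] split: prod.splits)
qed

end
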